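(* For $|\phi\rangle$ drawn uniformly at random from unit vectors in $\mathcal{H}_R$, with $\rho_S=\mathrm{Tr}_E(|\phi\rangle\langle\phi|)$ and $\rho_E=\mathrm{Tr}_S(|\phi\rangle\langle\phi|)$, \[ \langle\mathrm{Tr}\,\rho_S^2\rangle\le\mathrm{Tr}\,\langle\rho_S\rangle^2+\mathrm{Tr}\,\langle\rho_E\rangle^2=\mathrm{Tr}\,\Omega_S^2+\mathrm{Tr}\,\Omega_E^2 , \] where $\Omega_S=\mathrm{Tr}_E\,\mathcal{E}_R$, $\Omega_E=\mathrm{Tr}_S\,\mathcal{E}_R$.
   Context: Constraint subspace $\mathcal{H}_R\subseteq\mathcal{H}_S\otimes\mathcal{H}_E$ of dimension $d_R$; $\mathcal{E}_R=\mathbb{1}_R/d_R$ with $\mathbb{1}_R$ the identity on $\mathcal{H}_R$; $\langle\cdot\rangle$ is the average over the uniform distribution on unit vectors of $\mathcal{H}_R$ (so $\langle\rho_S\rangle=\Omega_S$, $\langle\rho_E\rangle=\Omega_E$). *)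

theory Defs
  imports "HOL-Analysis.Analysis"
begin

text \<open>Uniform (normalised surface) probability distribution on the unit sphere of a
  finite-dimensional real Euclidean space: the push-forward of the uniform distribution
  on the unit ball under radial projection.  For complex vectors \<open>complex^'r\<close>
  (viewed as \<open>\<real>^(2 CARD('r))\<close>) this is the uniform distribution on unit vectors.\<close>
definition uniform_sphere :: "('a::euclidean_space) measure" where
  "uniform_sphere = distr (uniform_measure lborel (ball 0 1)) borel (\<lambda>x. x /\<^sub>R norm x)"

definition adj :: "complex^'n^'m \<Rightarrow> complex^'m^'n" where
  "adj A = (\<chi> i j. cnj (A $ j $ i))"

definition ketbra :: "complex^'n \<Rightarrow> complex^'n^'n" where
  "ketbra \<phi> = (\<chi> a b. \<phi> $ a * cnj (\<phi> $ b))"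

definition ptrace_E :: "complex^('s::finite \<times> 'e::finite)^('s \<times> 'e) \<Rightarrow> complex^'s^'s" where
  "ptrace_E A = (\<chi> i i'. \<Sum>e\<in>UNIV. A $ (i, e) $ (i', e))"

definition ptrace_S :: "complex^('s::finite \<times> 'e::finite)^('s \<times> 'e) \<Rightarrow> complex^'e^'e" where
  "ptrace_S A = (\<chi> j j'. \<Sum>s\<in>UNIV. A $ (s, j) $ (s, j'))"

definition avg_mat :: "'x measure \<Rightarrow> ('x \<Rightarrow> complex^'n^'m) \<Rightarrow> complex^'n^'m" where
  "avg_mat M f = (\<chi> i j. integral\<^sup>L M (\<lambda>x. f x $ i $ j))"

end

theory Submission
  imports Defs "HOL-Library.Numeral_Type" "HOL-Probability.Probability_Measure"
begin

(* Let x be uniform on the unit sphere of C^n, n = CARD('r), and phi = V x.  The uniform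
   distribution is invariant under unitary maps, an invariance inherited from Lebesgue measure.
   Multiplying one coordinate by i kills every moment E[x_a x_b^* x_c x_d^*] whose indices do not
   pair up, a Hadamard rotation of two coordinates gives E|x_a|^4 = 2 E[|x_a|^2 |x_c|^2], and
   |x| = 1 fixes the normalisation.  Hence, with P = V V^*,
     E[phi_p phi_q^*] = P_pq / n,   E[phi_p phi_q^* phi_r phi_t^*] = (P_pq P_rt + P_pt P_rq) / (n (n + 1)).
   In the quartic expansion of Tr rho_S^2 the two pairings produce Tr Omega_S^2 and Tr Omega_E^2, so
     <Tr rho_S^2> = n / (n + 1) (Tr Omega_S^2 + Tr Omega_E^2),
   and both traces are nonnegative because Omega_S and Omega_E are Hermitian. *)

lemma linear_borel_measurable:
  fixes f :: "'a::euclidean_space \<Rightarrow> 'b::real_normed_vector"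
  assumes "linear f"
  shows "f \<in> borel_measurable borel"
  using assms by (intro borel_measurable_continuous_onI linear_continuous_on)
    (simp add: linear_conv_bounded_linear)

lemma lborel_distr_orthogonal_transformation_vec:
  fixes T :: "real^'n::{finite,wellorder} \<Rightarrow> real^'n::{finite,wellorder}"
  assumes T: "orthogonal_transformation T"
  shows "distr lborel borel T = lborel"
proof (rule lborel_eqI[symmetric])
  have T_meas: "T \<in> borel_measurable borel"
    using T orthogonal_transformation_linear linear_borel_measurable by blast
  have Tinv: "orthogonal_transformation (inv T)"
    using T orthogonal_transformation_inv by blast
  fix l u :: "real^'n::{finite,wellorder}" assume le: "\<And>b. b \<in> Basis \<Longrightarrow> l \<bullet> b \<le> u \<bullet> b"
  have preimage: "T -` box l u = inv T ` box l u"
    using T orthogonal_transformation_bij bij_vimage_eq_inv_image by blast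
  have "emeasure (distr lborel borel T) (box l u) = emeasure lebesgue (inv T ` box l u)"
    using T_meas measurable_sets_borel[OF T_meas, of "box l u"]
    by (simp add: emeasure_distr preimage[symmetric])
  also have "\<dots> = ennreal (measure lebesgue (box l u))"
    using measurable_orthogonal_image[OF Tinv] measure_orthogonal_image[OF Tinv]
    by (simp add: emeasure_eq_measure2)
  also have "\<dots> = (\<Prod>b\<in>Basis. (u - l) \<bullet> b)"
    using le by (simp add: emeasure_eq_measure2[symmetric])
  finally show "emeasure (distr lborel borel T) (box l u) = (\<Prod>b\<in>Basis. (u - l) \<bullet> b)" .
qed simp

lemma lborel_distr_Basis_isometry:
  fixes L :: "'a::euclidean_space \<Rightarrow> 'b::euclidean_space"
  assumes L: "linear L" and inner_L: "\<And>x y. L x \<bullet> L y = x \<bullet> y" and Basis_L: "L ` Basis = Basis"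
  shows "distr lborel borel L = lborel"
proof (rule lborel_eqI[symmetric])
  have inj: "inj_on L Basis"
  proof (rule inj_onI)
    fix b b' :: 'a assume b: "b \<in> Basis" "b' \<in> Basis" "L b = L b'"
    then have "b \<bullet> b' = 1" using inner_L[of b b'] inner_L[of b' b'] by (simp add: inner_Basis)
    then show "b = b'" using b by (simp add: inner_Basis split: if_splits)
  qed
  fix l u :: 'b assume le: "\<And>b. b \<in> Basis \<Longrightarrow> l \<bullet> b \<le> u \<bullet> b"
  define P where "P y = (\<Sum>b\<in>Basis. (y \<bullet> L b) *\<^sub>R b)" for y
  have inner_P: "b \<in> Basis \<Longrightarrow> P y \<bullet> b = y \<bullet> L b" for y b
    by (simp add: P_def)
  have "L x \<in> box l u \<longleftrightarrow> x \<in> box (P l) (P u)" for x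
  proof -
    have "L x \<in> box l u \<longleftrightarrow> (\<forall>b\<in>Basis. l \<bullet> L b < L x \<bullet> L b \<and> L x \<bullet> L b < u \<bullet> L b)"
      unfolding mem_box by (metis (no_types, lifting) Basis_L image_eqI imageE)
    then show ?thesis by (simp add: mem_box inner_P inner_L)
  qed
  then have "L -` box l u = box (P l) (P u)" by blast
  then have "emeasure (distr lborel borel L) (box l u) = emeasure lborel (box (P l) (P u))"
    using linear_borel_measurable[OF L] by (simp add: emeasure_distr)
  also have "\<dots> = (\<Prod>b\<in>Basis. (u - l) \<bullet> L b)"
    using le Basis_L by (subst emeasure_lborel_box) (auto simp: inner_P inner_diff_left)
  also have "\<dots> = (\<Prod>b\<in>Basis. (u - l) \<bullet> b)"
    using prod.reindex[OF inj, of "\<lambda>c. (u - l) \<bullet> c"] Basis_L by simp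
  finally show "emeasure (distr lborel borel L) (box l u) = (\<Prod>b\<in>Basis. (u - l) \<bullet> b)" .
qed simp

lemma obtain_Basis_isometry_vec:
  assumes "CARD('n::finite) = DIM('a::euclidean_space)"
  obtains E :: "real^'n::finite \<Rightarrow> 'a::euclidean_space" and C :: "'a \<Rightarrow> real^'n"
  where "linear E" "linear C" "\<And>y. C (E y) = y" "\<And>x. E (C x) = x"
    "\<And>y z. E y \<bullet> E z = y \<bullet> z" "E ` Basis = Basis"
proof -
  obtain f :: "'n \<Rightarrow> 'a" where f: "bij_betw f UNIV Basis"
    using assms finite_same_card_bij[of "UNIV :: 'n set" "Basis :: 'a set"] by auto
  define E :: "real^'n \<Rightarrow> 'a" where "E y = (\<Sum>i\<in>UNIV. (y $ i) *\<^sub>R f i)" for y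
  define C :: "'a \<Rightarrow> real^'n" where "C x = (\<chi> i. x \<bullet> f i)" for x
  have inner_f: "f i \<bullet> f j = (if i = j then 1 else 0)" for i j
    using f bij_betwE[OF f] by (simp add: inner_Basis bij_betw_def inj_eq)
  have "linear E" "linear C"
    by (auto intro!: linearI simp: E_def C_def vec_eq_iff scaleR_add_left sum.distrib
        scaleR_sum_right inner_add_left)
  moreover have "C (E y) = y" for y
    by (simp add: C_def E_def vec_eq_iff inner_sum_left inner_f if_distrib cong: if_cong)
  moreover have "E (C x) = x" for x
    using sum.reindex_bij_betw[OF f, of "\<lambda>b. (x \<bullet> b) *\<^sub>R b"]
    by (simp add: C_def E_def euclidean_representation)
  moreover have "E y \<bullet> E z = y \<bullet> z" for y z
    by (simp add: E_def inner_vec_def inner_sum_left inner_sum_right inner_f if_distrib mult.commute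
        cong: if_cong)
  moreover have "E ` Basis = Basis"
  proof -
    have "E (axis i 1) = f i" for i
      by (simp add: E_def axis_def if_distrib[of "\<lambda>c. c *\<^sub>R _"] cong: if_cong)
    moreover have "E ` Basis = range (\<lambda>i. E (axis i 1))"
      by (auto simp: Basis_vec_def)
    ultimately show ?thesis
      using f by (simp add: bij_betw_def)
  qed
  ultimately show ?thesis
    using that by blast
qed

text \<open>The library proves invariance of Lebesgue measure under orthogonal maps only on
  \<open>real^'n\<close> with a well-ordered index type; the type \<open>'n\<close> of the right cardinality transports
  it to an arbitrary Euclidean space.\<close>

lemma lborel_distr_orthogonal_transformation:
  fixes T :: "'a::euclidean_space \<Rightarrow> 'a"
  assumes T: "orthogonal_transformation T" and dim: "CARD('n::{finite,wellorder}) = DIM('a)"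
  shows "distr lborel borel T = lborel"
proof -
  obtain E :: "real^'n::{finite,wellorder} \<Rightarrow> 'a" and C
    where E: "linear E" "linear C" "\<And>y. C (E y) = y" "\<And>x. E (C x) = x"
      "\<And>y z. E y \<bullet> E z = y \<bullet> z" "E ` Basis = Basis"
    using obtain_Basis_isometry_vec[OF dim] by metis
  have E_lborel: "distr lborel borel E = lborel"
    using lborel_distr_Basis_isometry E(1,5,6) by blast
  have norm_E: "norm (E y) = norm y" and norm_C: "norm (C x) = norm x" for y x
    using E(5)[of y y] E(5)[of "C x" "C x"] by (simp_all add: E(4) norm_eq_sqrt_inner)
  define T' where "T' = C \<circ> T \<circ> E"
  have T': "orthogonal_transformation T'"
    using T unfolding orthogonal_transformation T'_def
    by (auto intro!: linear_compose E(1,2) simp: norm_C norm_E)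
  have measurable:
      "T \<in> borel_measurable borel" "E \<in> borel_measurable borel" "T' \<in> borel_measurable borel"
    using T T' E(1) by (auto intro: linear_borel_measurable orthogonal_transformation_linear)
  have "T \<circ> E = E \<circ> T'"
    by (simp add: T'_def fun_eq_iff E(4))
  then have "distr (distr lborel borel E) borel T = distr (distr lborel borel T') borel E"
    using measurable by (simp add: distr_distr)
  then show ?thesis
    by (simp add: E_lborel lborel_distr_orthogonal_transformation_vec[OF T'])
qed

text \<open>\<open>'r bit0\<close> is a well-ordered type with \<open>2 * CARD('r) = DIM(complex^'r)\<close> elements.\<close>

corollary lborel_distr_orthogonal_transformation_complex:
  fixes U :: "complex^'r \<Rightarrow> complex^'r"
  assumes "orthogonal_transformation U"
  shows "distr lborel borel U = lborel"
  using lborel_distr_orthogonal_transformation[where 'n="'r bit0", OF assms] by simp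

lemma sets_uniform_sphere [simp, measurable_cong]: "sets uniform_sphere = sets borel"
  by (simp add: uniform_sphere_def)

lemma space_uniform_sphere [simp]: "space uniform_sphere = UNIV"
  by (simp add: uniform_sphere_def)

lemma prob_space_uniform_sphere: "prob_space (uniform_sphere :: 'a::euclidean_space measure)"
proof -
  have "0 < emeasure lborel (ball (0::'a) 1)"
    by (simp add: emeasure_ball)
  then have "prob_space (uniform_measure lborel (ball (0::'a) 1))"
    using emeasure_lborel_ball_finite[of "0::'a" 1] by (intro prob_space_uniform_measure) auto
  then show ?thesis
    unfolding uniform_sphere_def by (rule prob_space.prob_space_distr) simp
qed

lemma measure_uniform_sphere_UNIV [simp]: "measure uniform_sphere UNIV = 1"
  using prob_space.prob_space[OF prob_space_uniform_sphere] by simp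

lemma AE_uniform_sphere_norm: "AE x in uniform_sphere. norm (x::'a::euclidean_space) = 1"
proof -
  have "AE x in uniform_measure lborel (ball 0 1). norm (x /\<^sub>R norm x :: 'a) = 1"
    using AE_lborel_singleton[of "0::'a"]
    by (intro AE_uniform_measureI) (auto elim!: eventually_mono)
  then show ?thesis
    unfolding uniform_sphere_def by (subst AE_distr_iff) auto
qed

lemma integrable_uniform_sphere_continuous:
  fixes g :: "'a::euclidean_space \<Rightarrow> 'b::{banach,second_countable_topology}"
  assumes g: "continuous_on UNIV g"
  shows "integrable uniform_sphere g"
proof -
  interpret prob_space "uniform_sphere :: 'a measure"
    by (rule prob_space_uniform_sphere)
  have "compact (g ` sphere 0 1)"
    using g by (intro compact_continuous_image) (auto intro: continuous_on_subset)
  then obtain B where "\<forall>y\<in>g ` sphere 0 1. norm y \<le> B"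
    using compact_imp_bounded bounded_iff by blast
  then have B: "norm x = 1 \<Longrightarrow> norm (g x) \<le> B" for x
    by simp
  have "AE x in uniform_sphere. norm (g x) \<le> B"
    using AE_uniform_sphere_norm by eventually_elim (rule B)
  then show ?thesis
    using borel_measurable_continuous_onI[OF g] by (intro integrable_const_bound) auto
qed

lemma uniform_sphere_distr_orthogonal_transformation:
  fixes U :: "complex^'r \<Rightarrow> complex^'r"
  assumes U: "orthogonal_transformation U"
  shows "distr uniform_sphere borel U = uniform_sphere"
proof -
  let ?B = "uniform_measure lborel (ball (0::complex^'r) 1)" and ?n = "\<lambda>x::complex^'r. x /\<^sub>R norm x"
  have U_meas: "U \<in> borel_measurable borel"
    using U orthogonal_transformation_linear linear_borel_measurable by blast
  have n_meas: "?n \<in> borel_measurable borel"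
    by measurable
  have distr_comp: "distr (distr ?B borel f) borel g = distr ?B borel (g \<circ> f)"
    if "f \<in> borel_measurable borel" "g \<in> borel_measurable borel"
    for f g :: "complex^'r \<Rightarrow> complex^'r"
    using that by (subst distr_distr) auto
  have ball_invariant: "distr ?B borel U = ?B"
  proof (rule measure_eqI)
    fix A assume "A \<in> sets (distr ?B borel U)"
    then have A: "A \<in> sets borel" by simp
    have "U -` A \<inter> ball 0 1 = U -` (A \<inter> ball 0 1)"
      using U by (auto simp: orthogonal_transformation)
    then have "emeasure lborel (U -` A \<inter> ball 0 1) = emeasure (distr lborel borel U) (A \<inter> ball 0 1)"
      using U_meas A by (subst emeasure_distr) auto
    then show "emeasure (distr ?B borel U) A = emeasure ?B A"
      using U_meas A measurable_sets_borel[OF U_meas A]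
      by (simp add: emeasure_distr Int_commute lborel_distr_orthogonal_transformation_complex[OF U])
  qed simp
  have "distr (distr ?B borel ?n) borel U = distr ?B borel (U \<circ> ?n)"
    by (rule distr_comp[OF n_meas U_meas])
  also have "U \<circ> ?n = ?n \<circ> U"
    using U by (auto simp: fun_eq_iff orthogonal_transformation orthogonal_transformation_scaleR)
  also have "distr ?B borel (?n \<circ> U) = distr (distr ?B borel U) borel ?n"
    by (rule distr_comp[OF U_meas n_meas, symmetric])
  finally show ?thesis
    unfolding uniform_sphere_def ball_invariant .
qed

lemma integral_uniform_sphere_orthogonal_transformation:
  fixes U :: "complex^'r \<Rightarrow> complex^'r"
    and g :: "complex^'r \<Rightarrow> 'b::{banach,second_countable_topology}"
  assumes U: "orthogonal_transformation U" and g: "g \<in> borel_measurable borel"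
  shows "(\<integral>x. g (U x) \<partial>uniform_sphere) = (\<integral>x. g x \<partial>uniform_sphere)"
proof -
  have "U \<in> borel_measurable borel"
    using U orthogonal_transformation_linear linear_borel_measurable by blast
  then show ?thesis
    using g by (subst (2) uniform_sphere_distr_orthogonal_transformation[OF U, symmetric])
      (simp add: integral_distr)
qed

definition moment2 :: "'r::finite \<Rightarrow> 'r \<Rightarrow> complex" where
  "moment2 a b = (\<integral>x. x $ a * cnj (x $ b) \<partial>(uniform_sphere :: (complex^'r) measure))"

definition moment4 :: "'r::finite \<Rightarrow> 'r \<Rightarrow> 'r \<Rightarrow> 'r \<Rightarrow> complex" where
  "moment4 a b c d =
     (\<integral>x. x $ a * cnj (x $ b) * x $ c * cnj (x $ d) \<partial>(uniform_sphere :: (complex^'r) measure))"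

lemma integrable_uniform_sphere_monomial [simp]:
  "integrable uniform_sphere (\<lambda>x::complex^'r. x $ a * cnj (x $ b))"
  "integrable uniform_sphere (\<lambda>x::complex^'r. x $ a * cnj (x $ b) * x $ c * cnj (x $ d))"
  by (intro integrable_uniform_sphere_continuous continuous_intros)+

lemma borel_measurable_monomial [measurable]:
  "(\<lambda>x::complex^'r. x $ a * cnj (x $ b)) \<in> borel_measurable borel"
  "(\<lambda>x::complex^'r. x $ a * cnj (x $ b) * x $ c * cnj (x $ d)) \<in> borel_measurable borel"
  by (intro borel_measurable_continuous_onI continuous_intros)+

definition phase_shift :: "'r \<Rightarrow> complex^'r \<Rightarrow> complex^'r" where
  "phase_shift k x = (\<chi> j. (if j = k then \<i> else 1) * x $ j)"

lemma orthogonal_transformation_phase_shift: "orthogonal_transformation (phase_shift k)"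
  unfolding orthogonal_transformation
proof
  show "linear (phase_shift k)"
    by (rule linearI) (auto simp: phase_shift_def vec_eq_iff scaleR_conv_of_real algebra_simps)
  show "\<forall>v. norm (phase_shift k v) = norm v"
    by (simp add: phase_shift_def norm_vec_def L2_set_def norm_mult)
qed

lemma moment2_phase_shift:
  "moment2 a b = (if a = k then \<i> else 1) * cnj (if b = k then \<i> else 1) * moment2 a b"
proof -
  have "moment2 a b = (\<integral>x. phase_shift k x $ a * cnj (phase_shift k x $ b) \<partial>uniform_sphere)"
    unfolding moment2_def
    by (rule integral_uniform_sphere_orthogonal_transformation
        [OF orthogonal_transformation_phase_shift, symmetric]) simp
  also have "\<dots> = (\<integral>x. ((if a = k then \<i> else 1) * cnj (if b = k then \<i> else 1))
      * (x $ a * cnj (x $ b)) \<partial>uniform_sphere)"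
    by (simp add: phase_shift_def mult_ac)
  finally show ?thesis
    by (simp add: moment2_def)
qed

lemma moment4_phase_shift:
  "moment4 a b c d = (if a = k then \<i> else 1) * cnj (if b = k then \<i> else 1)
     * (if c = k then \<i> else 1) * cnj (if d = k then \<i> else 1) * moment4 a b c d"
proof -
  have "moment4 a b c d = (\<integral>x. phase_shift k x $ a * cnj (phase_shift k x $ b)
      * phase_shift k x $ c * cnj (phase_shift k x $ d) \<partial>uniform_sphere)"
    unfolding moment4_def
    by (rule integral_uniform_sphere_orthogonal_transformation
        [OF orthogonal_transformation_phase_shift, symmetric]) simp
  also have "\<dots> = (\<integral>x. ((if a = k then \<i> else 1) * cnj (if b = k then \<i> else 1)
      * (if c = k then \<i> else 1) * cnj (if d = k then \<i> else 1))
      * (x $ a * cnj (x $ b) * x $ c * cnj (x $ d)) \<partial>uniform_sphere)"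
    by (simp add: phase_shift_def mult_ac)
  finally show ?thesis
    by (simp add: moment4_def)
qed

lemma moment2_eq_0: "a \<noteq> b \<Longrightarrow> moment2 a b = 0"
  using moment2_phase_shift[of a b a] by simp

lemma moment4_eq_0:
  assumes "\<not> (a = b \<and> c = d)" "\<not> (a = d \<and> c = b)"
  shows "moment4 a b c d = 0"
  using moment4_phase_shift[of a b c d a] moment4_phase_shift[of a b c d c] assms
  by (auto split: if_splits)

lemma moment4_commute: "moment4 c d a b = moment4 a b c d"
  unfolding moment4_def by (simp add: mult_ac)

lemma moment4_swap_cnj: "moment4 a d c b = moment4 a b c d"
proof -
  have "x $ a * cnj (x $ d) * x $ c * cnj (x $ b) = x $ a * cnj (x $ b) * x $ c * cnj (x $ d)"
    for x :: "complex^'a"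
    by (simp add: mult_ac)
  then show ?thesis
    by (simp only: moment4_def)
qed

definition hadamard_mix :: "'r \<Rightarrow> 'r \<Rightarrow> complex^'r \<Rightarrow> complex^'r" where
  "hadamard_mix a c x = (\<chi> j. if j = a then (x $ a + x $ c) / of_real (sqrt 2)
     else if j = c then (x $ a - x $ c) / of_real (sqrt 2) else x $ j)"

lemma orthogonal_transformation_hadamard_mix:
  fixes a c :: "'r::finite"
  assumes ac: "a \<noteq> c"
  shows "orthogonal_transformation (hadamard_mix a c)"
  unfolding orthogonal_transformation
proof
  have scaleR_complex: "r *\<^sub>R z = of_real r * z" for r and z :: complex
    by (simp add: scaleR_conv_of_real)
  show "linear (hadamard_mix a c)"
    by (rule linearI) (auto simp: hadamard_mix_def vec_eq_iff scaleR_complex add_divide_distrib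
        diff_divide_distrib algebra_simps)
  have sum_split: "sum f UNIV = f a + f c + sum f (UNIV - {a, c})" for f :: "'r \<Rightarrow> real"
  proof -
    have "sum f UNIV = f a + sum f (UNIV - {a})"
      by (simp add: sum.remove)
    also have "sum f (UNIV - {a}) = f c + sum f (UNIV - {a} - {c})"
      using ac by (intro sum.remove) auto
    finally show ?thesis
      by (simp add: add.assoc Diff_insert2[symmetric])
  qed
  have parallelogram: "(cmod ((p + q) / of_real (sqrt 2)))\<^sup>2 + (cmod ((p - q) / of_real (sqrt 2)))\<^sup>2
      = (cmod p)\<^sup>2 + (cmod q)\<^sup>2" for p q :: complex
    unfolding norm_divide power_divide cmod_power2 by (simp add: power2_sum power2_diff field_simps)
  show "\<forall>v. norm (hadamard_mix a c v) = norm v"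
  proof
    fix v :: "complex^'r"
    have "(\<Sum>j\<in>UNIV. (cmod (hadamard_mix a c v $ j))\<^sup>2)
        = (cmod ((v $ a + v $ c) / of_real (sqrt 2)))\<^sup>2 + (cmod ((v $ a - v $ c) / of_real (sqrt 2)))\<^sup>2
          + (\<Sum>j\<in>UNIV - {a, c}. (cmod (v $ j))\<^sup>2)"
      using ac by (subst sum_split) (simp add: hadamard_mix_def)
    also have "\<dots> = (\<Sum>j\<in>UNIV. (cmod (v $ j))\<^sup>2)"
      by (simp only: parallelogram sum_split[of "\<lambda>j. (cmod (v $ j))\<^sup>2"])
    finally show "norm (hadamard_mix a c v) = norm v"
      by (simp add: norm_vec_def L2_set_def)
  qed
qed

lemma hadamard_mix_norm_sq:
  assumes "a \<noteq> c"
  shows "hadamard_mix a c x $ a * cnj (hadamard_mix a c x $ a)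
    = (x $ a + x $ c) * cnj (x $ a + x $ c) / 2"
proof -
  have "of_real (sqrt 2) * of_real (sqrt 2) = (2::complex)"
    by (simp flip: of_real_mult)
  then show ?thesis
    by (simp add: hadamard_mix_def field_simps)
qed

lemma moment2_hadamard_mix:
  assumes ac: "a \<noteq> c"
  shows "moment2 a a = moment2 c c"
proof -
  have "moment2 a a = (\<integral>x. hadamard_mix a c x $ a * cnj (hadamard_mix a c x $ a) \<partial>uniform_sphere)"
    unfolding moment2_def
    by (rule integral_uniform_sphere_orthogonal_transformation
        [OF orthogonal_transformation_hadamard_mix[OF ac], symmetric]) simp
  also have "\<dots> = (\<integral>x. (x $ a * cnj (x $ a) + x $ c * cnj (x $ c) + x $ a * cnj (x $ c)
      + x $ c * cnj (x $ a)) / 2 \<partial>uniform_sphere)"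
    using ac by (simp add: hadamard_mix_norm_sq algebra_simps)
  also have "\<dots> = (moment2 a a + moment2 c c + moment2 a c + moment2 c a) / 2"
    by (simp add: moment2_def)
  finally show ?thesis
    using ac by (simp add: moment2_eq_0)
qed

lemma moment4_hadamard_mix:
  assumes ac: "a \<noteq> c"
  shows "4 * moment4 a a a a = moment4 a a a a + moment4 c c c c + 4 * moment4 a a c c"
proof -
  define m where "m i j k l x = x $ i * cnj (x $ j) * x $ k * cnj (x $ l)"
    for i j k l and x :: "complex^'a"
  have expand: "m a a a a (hadamard_mix a c x) = (m a a a a x + m c c c c x + 4 * m a a c c x
      + m a c a c x + m c a c a x + 2 * (m a a a c x + m a a c a x + m c c a c x + m c c c a x)) / 4"
    for x
  proof -
    have "m a a a a (hadamard_mix a c x) = ((x $ a + x $ c) * cnj (x $ a + x $ c) / 2)\<^sup>2"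
      by (simp add: m_def power2_eq_square hadamard_mix_norm_sq[OF ac] mult_ac)
    then show ?thesis
      by (simp add: m_def power2_eq_square algebra_simps)
  qed
  have "moment4 a a a a = (\<integral>x. m a a a a (hadamard_mix a c x) \<partial>uniform_sphere)"
    unfolding moment4_def m_def
    by (rule integral_uniform_sphere_orthogonal_transformation
        [OF orthogonal_transformation_hadamard_mix[OF ac], symmetric]) simp
  also have "\<dots> = (moment4 a a a a + moment4 c c c c + 4 * moment4 a a c c
      + moment4 a c a c + moment4 c a c a
      + 2 * (moment4 a a a c + moment4 a a c a + moment4 c c a c + moment4 c c c a)) / 4"
    unfolding expand by (simp add: moment4_def m_def)
  finally show ?thesis
    using ac by (simp add: moment4_eq_0)
qed

lemma sum_mult_cnj_eq_norm_sq: "(\<Sum>a\<in>UNIV. x $ a * cnj (x $ a)) = of_real ((norm x)\<^sup>2)"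
  for x :: "complex^'r::finite"
proof -
  have "(norm x)\<^sup>2 = (\<Sum>a\<in>UNIV. (cmod (x $ a))\<^sup>2)"
    by (simp add: norm_vec_def L2_set_def sum_nonneg)
  then show ?thesis
    by (simp add: complex_norm_square[symmetric] of_real_sum)
qed

lemma AE_uniform_sphere_sum_mult_cnj:
  "AE x in uniform_sphere. (\<Sum>a\<in>UNIV. x $ a * cnj (x $ a)) = (1::complex)"
  using AE_uniform_sphere_norm by eventually_elim (simp add: sum_mult_cnj_eq_norm_sq)

lemma sum_moment2: "(\<Sum>a\<in>(UNIV::'r::finite set). moment2 a a) = 1"
proof -
  have "(\<Sum>a\<in>(UNIV::'r set). moment2 a a)
      = (\<integral>x. (\<Sum>a\<in>(UNIV::'r set). x $ a * cnj (x $ a)) \<partial>uniform_sphere)"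
    by (simp add: moment2_def integral_sum)
  also have "\<dots> = (\<integral>x. 1 \<partial>(uniform_sphere :: (complex^'r) measure))"
    using AE_uniform_sphere_sum_mult_cnj
    by (intro integral_cong_AE) (auto intro!: borel_measurable_continuous_onI continuous_intros)
  finally show ?thesis
    by simp
qed

lemma sum_moment4: "(\<Sum>a\<in>(UNIV::'r::finite set). \<Sum>c\<in>UNIV. moment4 a a c c) = 1"
proof -
  have "(\<Sum>a\<in>(UNIV::'r set). \<Sum>c\<in>UNIV. moment4 a a c c)
      = (\<integral>x. (\<Sum>a\<in>(UNIV::'r set). \<Sum>c\<in>UNIV. x $ a * cnj (x $ a) * x $ c * cnj (x $ c)) \<partial>uniform_sphere)"
    by (simp add: moment4_def integral_sum integrable_sum)
  also have "\<dots> = (\<integral>x. (\<Sum>a\<in>(UNIV::'r set). x $ a * cnj (x $ a)) * (\<Sum>c\<in>UNIV. x $ c * cnj (x $ c))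
      \<partial>uniform_sphere)"
    by (simp add: sum_product mult.assoc)
  also have "\<dots> = (\<integral>x. 1 \<partial>(uniform_sphere :: (complex^'r) measure))"
    using AE_uniform_sphere_sum_mult_cnj
    by (intro integral_cong_AE) (auto intro!: borel_measurable_continuous_onI continuous_intros)
  finally show ?thesis
    by simp
qed

lemma moment2_eq: "moment2 a b = of_bool (a = b) / of_nat CARD('r)"
  for a b :: "'r::finite"
proof (cases "a = b")
  case True
  have diag: "moment2 c c = moment2 b b" for c :: 'r
    by (cases "c = b") (auto intro: moment2_hadamard_mix)
  have "(\<Sum>c\<in>(UNIV::'r set). moment2 c c) = (\<Sum>c\<in>(UNIV::'r set). moment2 b b)"
    by (intro sum.cong refl diag)
  then have "of_nat CARD('r) * moment2 b b = 1"
    using sum_moment2[where 'r='r] by simp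
  then show ?thesis
    using True by (simp add: field_simps)
qed (simp add: moment2_eq_0)

lemma moment4_pair:
  fixes a c :: "'r::finite"
  shows "moment4 a a c c = (1 + of_bool (a = c)) / (of_nat CARD('r) * (of_nat CARD('r) + 1))"
proof -
  define D where "D = moment4 a a a a"
  have diag: "moment4 d d d d = D" for d :: 'r
  proof (cases "d = a")
    case False
    then have "a \<noteq> d"
      by simp
    show ?thesis
      using moment4_hadamard_mix[OF \<open>a \<noteq> d\<close>] moment4_hadamard_mix[OF False] moment4_commute[of d d a a]
      unfolding D_def by algebra
  qed (simp add: D_def)
  have pair: "moment4 d d e e = (1 + of_bool (d = e)) * D / 2" for d e :: 'r
    using moment4_hadamard_mix[of d e] by (cases "d = e") (auto simp: diag field_simps)
  define N :: complex where "N = of_nat CARD('r) * (of_nat CARD('r) + 1)"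
  have "N \<noteq> 0"
    using of_nat_neq_0[of "CARD('r)", where 'a=complex] by (simp add: N_def add.commute)
  have "(\<Sum>d\<in>(UNIV::'r set). \<Sum>e\<in>UNIV. moment4 d d e e) = N * (D / 2)"
    by (simp add: N_def pair sum_divide_distrib[symmetric] sum_distrib_right[symmetric] sum.distrib
        algebra_simps)
  then have "D / 2 = 1 / N"
    using sum_moment4[where 'r='r] \<open>N \<noteq> 0\<close> by (simp add: field_simps)
  then show ?thesis
    by (simp add: pair N_def)
qed

lemma moment4_eq:
  fixes a b c d :: "'r::finite"
  shows "moment4 a b c d = (of_bool (a = b \<and> c = d) + of_bool (a = d \<and> c = b))
    / (of_nat CARD('r) * (of_nat CARD('r) + 1))"
proof -
  consider "a = b" "c = d" | "a = d" "c = b" "a \<noteq> c" | "\<not> (a = b \<and> c = d)" "\<not> (a = d \<and> c = b)"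
    by blast
  then show ?thesis
  proof cases
    case 1
    show ?thesis
      unfolding 1(1)[symmetric] 1(2)[symmetric] by (simp add: moment4_pair eq_commute[of c a])
  next
    case 2
    show ?thesis
      unfolding 2(1)[symmetric] 2(2)[symmetric] unfolding moment4_swap_cnj[of a c c a]
      using 2(3) by (simp add: moment4_pair)
  next
    case 3
    then have "moment4 a b c d = 0"
      by (rule moment4_eq_0)
    then show ?thesis
      unfolding of_bool_def if_not_P[OF 3(1)] if_not_P[OF 3(2)] by simp
  qed
qed

lemma sum_of_bool_pairings:
  fixes f :: "'a::finite \<Rightarrow> 'a \<Rightarrow> 'a \<Rightarrow> 'a \<Rightarrow> 'b::comm_semiring_1"
  shows "(\<Sum>i\<in>UNIV. \<Sum>j\<in>UNIV. \<Sum>k\<in>UNIV. \<Sum>l\<in>UNIV.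
      f i j k l * (of_bool (i = j \<and> k = l) + of_bool (i = l \<and> k = j)))
    = (\<Sum>i\<in>UNIV. \<Sum>k\<in>UNIV. f i i k k + f i k k i)"
  by (simp add: distrib_left sum.distrib of_bool_conj mult.assoc[symmetric]
      sum_distrib_right[symmetric])

lemma integral_matrix_vector_mult_cnj:
  fixes V :: "complex^'r^'m"
  shows "(\<integral>x. (V *v x) $ p * cnj ((V *v x) $ q) \<partial>uniform_sphere)
    = (V ** adj V) $ p $ q / of_nat CARD('r)"
proof -
  have "(V *v x) $ p * cnj ((V *v x) $ q)
      = (\<Sum>i\<in>UNIV. \<Sum>j\<in>UNIV. V $ p $ i * cnj (V $ q $ j) * (x $ i * cnj (x $ j)))" for x
    by (simp add: matrix_vector_mult_def cnj_sum sum_product mult_ac)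
  then have "(\<integral>x. (V *v x) $ p * cnj ((V *v x) $ q) \<partial>uniform_sphere)
      = (\<Sum>i\<in>UNIV. \<Sum>j\<in>UNIV. V $ p $ i * cnj (V $ q $ j) * moment2 i j)"
    by (simp add: moment2_def integral_sum integrable_sum)
  also have "\<dots> = (\<Sum>i\<in>UNIV. V $ p $ i * cnj (V $ q $ i)) / of_nat CARD('r)"
    by (simp add: moment2_eq sum_divide_distrib[symmetric])
  finally show ?thesis
    by (simp add: matrix_matrix_mult_def adj_def)
qed

lemma integrable_matrix_vector_mult_fourth [simp]:
  fixes V :: "complex^'r^'m"
  shows "integrable uniform_sphere
    (\<lambda>x. (V *v x) $ p * cnj ((V *v x) $ q) * (V *v x) $ r * cnj ((V *v x) $ t))"
  by (intro integrable_uniform_sphere_continuous continuous_intros)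

lemma integral_matrix_vector_mult_fourth:
  fixes V :: "complex^'r^'m"
  defines "E \<equiv> (\<chi> a b. (V ** adj V) $ a $ b / of_nat CARD('r))"
  shows "(\<integral>x. (V *v x) $ p * cnj ((V *v x) $ q) * (V *v x) $ r * cnj ((V *v x) $ t) \<partial>uniform_sphere)
    = of_nat CARD('r) / (of_nat CARD('r) + 1) * (E $ p $ q * E $ r $ t + E $ p $ t * E $ r $ q)"
proof -
  define n :: complex where "n = of_nat CARD('r)"
  define C where "C i j k l = V $ p $ i * cnj (V $ q $ j) * V $ r $ k * cnj (V $ t $ l)" for i j k l
  have "(V *v x) $ p * cnj ((V *v x) $ q) * (V *v x) $ r * cnj ((V *v x) $ t)
      = (\<Sum>i\<in>UNIV. \<Sum>j\<in>UNIV. \<Sum>k\<in>UNIV. \<Sum>l\<in>UNIV.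
          C i j k l * (x $ i * cnj (x $ j) * x $ k * cnj (x $ l)))"
    for x
    by (subst sum.swap)
      (simp add: C_def matrix_vector_mult_def cnj_sum sum_distrib_left sum_distrib_right mult_ac)
  then have "(\<integral>x. (V *v x) $ p * cnj ((V *v x) $ q) * (V *v x) $ r * cnj ((V *v x) $ t) \<partial>uniform_sphere)
      = (\<Sum>i\<in>UNIV. \<Sum>j\<in>UNIV. \<Sum>k\<in>UNIV. \<Sum>l\<in>UNIV. C i j k l * moment4 i j k l)"
    by (simp add: moment4_def integral_sum integrable_sum)
  also have "\<dots> = (\<Sum>i\<in>UNIV. \<Sum>j\<in>UNIV. \<Sum>k\<in>UNIV. \<Sum>l\<in>UNIV.
      C i j k l * (of_bool (i = j \<and> k = l) + of_bool (i = l \<and> k = j))) / (n * (n + 1))"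
    by (simp add: moment4_eq n_def sum_divide_distrib[symmetric])
  also have "\<dots> = (\<Sum>i\<in>UNIV. \<Sum>k\<in>UNIV. C i i k k + C i k k i) / (n * (n + 1))"
    by (simp only: sum_of_bool_pairings)
  also have "(\<Sum>i\<in>UNIV. \<Sum>k\<in>UNIV. C i i k k + C i k k i)
      = n\<^sup>2 * (E $ p $ q * E $ r $ t + E $ p $ t * E $ r $ q)"
    by (simp add: E_def n_def C_def matrix_matrix_mult_def adj_def sum.distrib sum_product
        power2_eq_square field_simps)
  finally show ?thesis
    by (simp add: n_def power2_eq_square)
qed

lemma avg_mat_ketbra_uniform_sphere:
  fixes V :: "complex^'r^'m"
  shows "avg_mat uniform_sphere (\<lambda>x. ketbra (V *v x))
    = (\<chi> a b. (V ** adj V) $ a $ b / of_nat CARD('r))"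
  by (simp add: avg_mat_def ketbra_def integral_matrix_vector_mult_cnj)

lemma integrable_ketbra_matrix_vector_mult:
  fixes V :: "complex^'r^'m"
  shows "integrable uniform_sphere (\<lambda>x. ketbra (V *v x) $ a $ b)"
  unfolding ketbra_def vec_lambda_beta
  by (intro integrable_uniform_sphere_continuous continuous_intros)

lemma avg_mat_ptrace_E:
  assumes "\<And>i j. integrable M (\<lambda>x. f x $ i $ j)"
  shows "avg_mat M (\<lambda>x. ptrace_E (f x)) = ptrace_E (avg_mat M f)"
  by (simp add: avg_mat_def ptrace_E_def integral_sum assms)

lemma avg_mat_ptrace_S:
  assumes "\<And>i j. integrable M (\<lambda>x. f x $ i $ j)"
  shows "avg_mat M (\<lambda>x. ptrace_S (f x)) = ptrace_S (avg_mat M f)"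
  by (simp add: avg_mat_def ptrace_S_def integral_sum assms)

lemma adj_ptrace_E: "adj (ptrace_E A) = ptrace_E (adj A)"
  by (simp add: adj_def ptrace_E_def cnj_sum)

lemma adj_ptrace_S: "adj (ptrace_S A) = ptrace_S (adj A)"
  by (simp add: adj_def ptrace_S_def cnj_sum)

lemma Re_trace_mult_self_nonneg:
  fixes A :: "complex^'n^'n"
  assumes "adj A = A"
  shows "0 \<le> Re (trace (A ** A))"
proof -
  have hermitian: "A $ j $ i = cnj (A $ i $ j)" for i j
    using arg_cong[OF assms, of "\<lambda>M. M $ j $ i"] by (simp add: adj_def)
  have "trace (A ** A) = (\<Sum>i\<in>UNIV. \<Sum>j\<in>UNIV. A $ i $ j * A $ j $ i)"
    by (simp add: trace_def matrix_matrix_mult_def)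
  also have "\<dots> = (\<Sum>i\<in>UNIV. \<Sum>j\<in>UNIV. A $ i $ j * cnj (A $ i $ j))"
    by (intro sum.cong refl arg_cong2[where f="(*)"] hermitian)
  also have "\<dots> = (\<Sum>i\<in>UNIV. \<Sum>j\<in>UNIV. of_real ((cmod (A $ i $ j))\<^sup>2))"
    by (simp only: complex_norm_square)
  finally show ?thesis
    by (simp add: sum_nonneg)
qed

lemma trace_ptrace_E_ketbra_sq:
  fixes \<phi> :: "complex^('s::finite \<times> 'e::finite)"
  shows "trace (ptrace_E (ketbra \<phi>) ** ptrace_E (ketbra \<phi>)) = (\<Sum>s\<in>UNIV. \<Sum>s'\<in>UNIV. \<Sum>e\<in>UNIV. \<Sum>e'\<in>UNIV.
    \<phi> $ (s, e) * cnj (\<phi> $ (s', e)) * \<phi> $ (s', e') * cnj (\<phi> $ (s, e')))"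
  by (simp add: trace_def matrix_matrix_mult_def ptrace_E_def ketbra_def sum_product mult.assoc)

lemma sum_swap_pairs:
  "(\<Sum>a\<in>A. \<Sum>b\<in>B. \<Sum>c\<in>C. \<Sum>d\<in>D. f a b c d) = (\<Sum>c\<in>C. \<Sum>d\<in>D. \<Sum>a\<in>A. \<Sum>b\<in>B. f a b c d)"
proof -
  have "(\<Sum>a\<in>A. \<Sum>b\<in>B. \<Sum>c\<in>C. \<Sum>d\<in>D. f a b c d) = (\<Sum>a\<in>A. \<Sum>c\<in>C. \<Sum>b\<in>B. \<Sum>d\<in>D. f a b c d)"
    by (rule sum.cong[OF refl], rule sum.swap)
  also have "\<dots> = (\<Sum>c\<in>C. \<Sum>a\<in>A. \<Sum>b\<in>B. \<Sum>d\<in>D. f a b c d)"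
    by (rule sum.swap)
  also have "\<dots> = (\<Sum>c\<in>C. \<Sum>a\<in>A. \<Sum>d\<in>D. \<Sum>b\<in>B. f a b c d)"
    by (rule sum.cong[OF refl], rule sum.cong[OF refl], rule sum.swap)
  also have "\<dots> = (\<Sum>c\<in>C. \<Sum>d\<in>D. \<Sum>a\<in>A. \<Sum>b\<in>B. f a b c d)"
    by (rule sum.cong[OF refl], rule sum.swap)
  finally show ?thesis .
qed

lemma sum_pairings_eq_trace_ptrace:
  fixes A :: "complex^('s::finite \<times> 'e::finite)^('s \<times> 'e)"
  shows "(\<Sum>s\<in>UNIV. \<Sum>s'\<in>UNIV. \<Sum>e\<in>UNIV. \<Sum>e'\<in>UNIV.
      A $ (s, e) $ (s', e) * A $ (s', e') $ (s, e') + A $ (s, e) $ (s, e') * A $ (s', e') $ (s', e))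
    = trace (ptrace_E A ** ptrace_E A) + trace (ptrace_S A ** ptrace_S A)"
proof -
  have "trace (ptrace_S A ** ptrace_S A) = (\<Sum>e\<in>UNIV. \<Sum>e'\<in>UNIV. \<Sum>s\<in>UNIV. \<Sum>s'\<in>UNIV.
      A $ (s, e) $ (s, e') * A $ (s', e') $ (s', e))"
    by (simp add: trace_def matrix_matrix_mult_def ptrace_S_def sum_product)
  also have "\<dots> = (\<Sum>s\<in>UNIV. \<Sum>s'\<in>UNIV. \<Sum>e\<in>UNIV. \<Sum>e'\<in>UNIV.
      A $ (s, e) $ (s, e') * A $ (s', e') $ (s', e))"
    by (rule sum_swap_pairs)
  finally show ?thesis
    by (simp add: trace_def matrix_matrix_mult_def ptrace_E_def sum_product sum.distrib)
qed

lemma has_bochner_integral_trace_ptrace_E_sq: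
  fixes V :: "complex^'r^('s::finite \<times> 'e::finite)"
  defines "E \<equiv> (\<chi> a b. (V ** adj V) $ a $ b / of_nat CARD('r))"
  shows "has_bochner_integral uniform_sphere
    (\<lambda>x. trace (ptrace_E (ketbra (V *v x)) ** ptrace_E (ketbra (V *v x))))
    (of_nat CARD('r) / (of_nat CARD('r) + 1)
      * (trace (ptrace_E E ** ptrace_E E) + trace (ptrace_S E ** ptrace_S E)))"
proof -
  have "(\<integral>x. trace (ptrace_E (ketbra (V *v x)) ** ptrace_E (ketbra (V *v x))) \<partial>uniform_sphere)
      = (\<Sum>s\<in>UNIV. \<Sum>s'\<in>UNIV. \<Sum>e\<in>UNIV. \<Sum>e'\<in>UNIV. \<integral>x. (V *v x) $ (s, e) * cnj ((V *v x) $ (s', e))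
          * (V *v x) $ (s', e') * cnj ((V *v x) $ (s, e')) \<partial>uniform_sphere)"
    by (simp add: trace_ptrace_E_ketbra_sq integral_sum integrable_sum)
  also have "\<dots> = of_nat CARD('r) / (of_nat CARD('r) + 1) * (\<Sum>s\<in>UNIV. \<Sum>s'\<in>UNIV. \<Sum>e\<in>UNIV. \<Sum>e'\<in>UNIV.
      E $ (s, e) $ (s', e) * E $ (s', e') $ (s, e') + E $ (s, e) $ (s, e') * E $ (s', e') $ (s', e))"
    unfolding E_def by (simp only: integral_matrix_vector_mult_fourth sum_distrib_left)
  also have "\<dots> = of_nat CARD('r) / (of_nat CARD('r) + 1)
      * (trace (ptrace_E E ** ptrace_E E) + trace (ptrace_S E ** ptrace_S E))"
    by (simp only: sum_pairings_eq_trace_ptrace)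
  finally show ?thesis
    by (simp add: has_bochner_integral_iff trace_ptrace_E_ketbra_sq integrable_sum)
qed

lemma adj_scaled_gram:
  fixes V :: "complex^'r^'m"
  shows "adj (\<chi> a b. (V ** adj V) $ a $ b / of_nat k) = (\<chi> a b. (V ** adj V) $ a $ b / of_nat k)"
  by (simp add: adj_def matrix_matrix_mult_def cnj_sum mult.commute)

theorem mainTheorem4:
  fixes V :: "complex^'r^('s::finite \<times> 'e::finite)"
  assumes isometry: "adj V ** V = mat 1"
  defines "\<rho>S \<equiv> (\<lambda>x::complex^'r. ptrace_E (ketbra (V *v x)))"
      and "\<rho>E \<equiv> (\<lambda>x::complex^'r. ptrace_S (ketbra (V *v x)))"
      and "\<E>R \<equiv> (\<chi> a b. (V ** adj V) $ a $ b / of_nat CARD('r))"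
  shows "((\<integral>x. Re (trace (\<rho>S x ** \<rho>S x)) \<partial>uniform_sphere)
           \<le> Re (trace (avg_mat uniform_sphere \<rho>S ** avg_mat uniform_sphere \<rho>S))
             + Re (trace (avg_mat uniform_sphere \<rho>E ** avg_mat uniform_sphere \<rho>E)))
    \<and> (Re (trace (avg_mat uniform_sphere \<rho>S ** avg_mat uniform_sphere \<rho>S))
             + Re (trace (avg_mat uniform_sphere \<rho>E ** avg_mat uniform_sphere \<rho>E))
         = Re (trace (ptrace_E \<E>R ** ptrace_E \<E>R)) + Re (trace (ptrace_S \<E>R ** ptrace_S \<E>R)))"
proof -
  define purity_S purity_E
    where "purity_S = Re (trace (ptrace_E \<E>R ** ptrace_E \<E>R))"
      and "purity_E = Re (trace (ptrace_S \<E>R ** ptrace_S \<E>R))"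
  have averages: "avg_mat uniform_sphere \<rho>S = ptrace_E \<E>R" "avg_mat uniform_sphere \<rho>E = ptrace_S \<E>R"
    by (simp_all add: \<rho>S_def \<rho>E_def \<E>R_def avg_mat_ptrace_E avg_mat_ptrace_S
        integrable_ketbra_matrix_vector_mult avg_mat_ketbra_uniform_sphere)
  have "(\<integral>x. Re (trace (\<rho>S x ** \<rho>S x)) \<partial>uniform_sphere)
      = CARD('r) / (CARD('r) + 1) * (purity_S + purity_E)"
    using has_bochner_integral_Re[OF has_bochner_integral_trace_ptrace_E_sq[of V]]
    by (simp add: \<rho>S_def \<E>R_def purity_S_def purity_E_def has_bochner_integral_iff)
  also have "\<dots> \<le> purity_S + purity_E"
    using Re_trace_mult_self_nonneg[of "ptrace_E \<E>R"] Re_trace_mult_self_nonneg[of "ptrace_S \<E>R"]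
    by (intro mult_left_le_one_le)
      (simp_all add: purity_S_def purity_E_def adj_ptrace_E adj_ptrace_S \<E>R_def adj_scaled_gram)
  finally show ?thesis
    by (simp add: averages purity_S_def purity_E_def)
qed

end
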